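(* Let $\mathbf X\in\mathbb R^{n\times d}$ have full column rank and let $d\le k\le n$. Sample a set $S_\circ\subseteq\{1,\dots,n\}$ with $|S_\circ|=d$ with probability $\det(\mathbf X_{S_\circ})^2/\det(\mathbf X^\top\mathbf X)$, and then, given $S_\circ$, sample a uniformly random subset $R\subseteq\{1,\dots,n\}\setminus S_\circ$ of size $k-d$. Then $S=S_\circ\cup R$ satisfies, for every $S\subseteq\{1,\dots,n\}$ with $|S|=k$, $P(S)=\dfrac{\det(\mathbf X_S^\top\mathbf X_S)}{\binom{n-d}{k-d}\det(\mathbf X^\top\mathbf X)}$.
   Context: For $T\subseteq\{1,\dots,n\}$, $\mathbf X_T$ denotes the submatrix of $\mathbf X$ consisting of the rows indexed by $T$. *)

theory Defs
  imports "HOL-Probability.Probability" "Jordan_Normal_Form.DL_Rank" "Jordan_Normal_Form.DL_Submatrix"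
begin

(* X_T: submatrix of X consisting of the rows indexed by T (0-based indices, all columns) *)
definition rows_sub :: "real mat \<Rightarrow> nat set \<Rightarrow> real mat" where
  "rows_sub X T = submatrix X T {0..<dim_col X}"

definition volume_pmf :: "real mat \<Rightarrow> nat set pmf" where
  "volume_pmf X = embed_pmf (\<lambda>S0. if S0 \<subseteq> {0..<dim_row X} \<and> card S0 = dim_col X
      then (det (rows_sub X S0))\<^sup>2 / det (transpose_mat X * X) else 0)"

definition augmented_pmf :: "real mat \<Rightarrow> nat \<Rightarrow> nat set pmf" where
  "augmented_pmf X k = bind_pmf (volume_pmf X) (\<lambda>S0.
      bind_pmf (pmf_of_set {R. R \<subseteq> {0..<dim_row X} - S0 \<and> card R = k - dim_col X})
        (\<lambda>R. return_pmf (S0 \<union> R)))"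

end

theory Submission
  imports Defs
begin

text \<open>By the Cauchy--Binet formula, \<open>det (X\<^sub>S\<^sup>T X\<^sub>S)\<close> is the sum of \<open>det (X\<^sub>T)\<^sup>2\<close> over the
  \<open>d\<close>-subsets \<open>T\<close> of \<open>S\<close>. The two-stage sampler returns \<open>S\<close> exactly when its first stage picks
  some \<open>T \<subseteq> S\<close>, which happens with probability \<open>det (X\<^sub>T)\<^sup>2 / det (X\<^sup>T X)\<close>, and its second stage
  then picks \<open>R = S - T\<close>, which happens with probability \<open>1 / binomial (n - d) (k - d)\<close>.
  Summing over \<open>T\<close> gives the claim; for \<open>S = {0..<n}\<close> the same formula shows that the
  first stage is a probability distribution.\<close>

lemma bij_betw_pick:
  assumes "finite T"
  shows "bij_betw (pick T) {0..<card T} T"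
proof -
  have inj: "inj_on (pick T) {0..<card T}"
    by (rule inj_onI, metis atLeastLessThan_iff nat_neq_iff pick_mono_le)
  have "pick T ` {0..<card T} \<subseteq> T" using pick_in_set_le by auto
  moreover have "card (pick T ` {0..<card T}) = card T" using card_image[OF inj] by simp
  ultimately have "pick T ` {0..<card T} = T" using card_subset_eq[OF assms] by blast
  with inj show ?thesis unfolding bij_betw_def by simp
qed

lemma pick_atLeastLessThan: "i < d \<Longrightarrow> pick {0..<d} i = i"
  using pick_card_in_set[of i "{0..<d}"] by (simp add: Collect_conj_eq Int_absorb1 subset_eq)

lemma bij_betw_permutations_bijections:
  assumes h: "bij_betw h A B"
  shows "bij_betw (\<lambda>\<tau> x. if x \<in> A then h (\<tau> x) else x)
    {\<tau>. \<tau> permutes A} {f. bij_betw f A B \<and> (\<forall>x. x \<notin> A \<longrightarrow> f x = x)}"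
proof (rule bij_betw_byWitness[where f' = "\<lambda>f x. if x \<in> A then inv_into A h (f x) else x"])
  have h': "bij_betw (inv_into A h) B A" by (rule bij_betw_inv_into[OF h])
  show "\<forall>\<tau>\<in>{\<tau>. \<tau> permutes A}.
      (\<lambda>x. if x \<in> A then inv_into A h (if x \<in> A then h (\<tau> x) else x) else x) = \<tau>"
    using h by (auto simp: fun_eq_iff permutes_in_image permutes_not_in bij_betw_inv_into_left)
  show "\<forall>f\<in>{f. bij_betw f A B \<and> (\<forall>x. x \<notin> A \<longrightarrow> f x = x)}.
      (\<lambda>x. if x \<in> A then h (if x \<in> A then inv_into A h (f x) else x) else x) = f"
    using h by (auto simp: fun_eq_iff bij_betw_inv_into_right dest: bij_betwE)
  show "(\<lambda>\<tau> x. if x \<in> A then h (\<tau> x) else x) ` {\<tau>. \<tau> permutes A}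
      \<subseteq> {f. bij_betw f A B \<and> (\<forall>x. x \<notin> A \<longrightarrow> f x = x)}"
  proof (intro image_subsetI CollectI conjI allI impI)
    fix \<tau> assume "\<tau> \<in> {\<tau>. \<tau> permutes A}"
    then have "bij_betw (h \<circ> \<tau>) A B" using bij_betw_trans h permutes_imp_bij by blast
    then show "bij_betw (\<lambda>x. if x \<in> A then h (\<tau> x) else x) A B"
      by (rule bij_betw_cong[THEN iffD1, rotated]) simp
  qed simp
  show "(\<lambda>f x. if x \<in> A then inv_into A h (f x) else x) `
      {f. bij_betw f A B \<and> (\<forall>x. x \<notin> A \<longrightarrow> f x = x)} \<subseteq> {\<tau>. \<tau> permutes A}"
  proof (intro image_subsetI CollectI)
    fix f assume "f \<in> {f. bij_betw f A B \<and> (\<forall>x. x \<notin> A \<longrightarrow> f x = x)}"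
    then have "bij_betw (inv_into A h \<circ> f) A A" using bij_betw_trans h' by blast
    then have "bij_betw (\<lambda>x. if x \<in> A then inv_into A h (f x) else x) A A"
      by (rule bij_betw_cong[THEN iffD1, rotated]) simp
    then show "(\<lambda>x. if x \<in> A then inv_into A h (f x) else x) permutes A"
      by (rule bij_imp_permutes) simp
  qed
qed

section \<open>The Cauchy--Binet formula\<close>

lemma det_mat_sum_expand_rows:
  fixes a b :: "nat \<Rightarrow> nat \<Rightarrow> 'a :: comm_ring_1"
  assumes S: "finite S"
  shows "det (mat d d (\<lambda>(i,j). \<Sum>r\<in>S. a r i * b r j)) =
    (\<Sum>f | (\<forall>i\<in>{0..<d}. f i \<in> S) \<and> (\<forall>i. i \<notin> {0..<d} \<longrightarrow> f i = i).
      (\<Prod>i\<in>{0..<d}. a (f i) i) * det (mat d d (\<lambda>(i,j). b (f i) j)))"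
proof -
  have rows: "mat d d (\<lambda>(i,j). \<Sum>r\<in>S. a r i * b r j) =
      mat\<^sub>r d d (\<lambda>i. finsum_vec TYPE('a) d (\<lambda>r. a r i \<cdot>\<^sub>v vec d (b r)) S)"
    by (rule eq_matI) (auto simp: index_finsum_vec[OF S] intro!: sum.cong)
  have "det (mat d d (\<lambda>(i,j). \<Sum>r\<in>S. a r i * b r j)) =
      (\<Sum>f | (\<forall>i\<in>{0..<d}. f i \<in> S) \<and> (\<forall>i. i \<notin> {0..<d} \<longrightarrow> f i = i).
        det (mat\<^sub>r d d (\<lambda>i. a (f i) i \<cdot>\<^sub>v vec d (b (f i)))))"
    unfolding rows by (rule det_linear_rows_sum[OF S]) auto
  also have "\<dots> = (\<Sum>f | (\<forall>i\<in>{0..<d}. f i \<in> S) \<and> (\<forall>i. i \<notin> {0..<d} \<longrightarrow> f i = i).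
      (\<Prod>i\<in>{0..<d}. a (f i) i) * det (mat d d (\<lambda>(i,j). b (f i) j)))"
  proof (rule sum.cong[OF refl])
    fix f
    have "mat\<^sub>r d d (\<lambda>i. vec d (b (f i))) = mat d d (\<lambda>(i,j). b (f i) j)"
      by (rule eq_matI) auto
    then show "det (mat\<^sub>r d d (\<lambda>i. a (f i) i \<cdot>\<^sub>v vec d (b (f i)))) =
        (\<Prod>i\<in>{0..<d}. a (f i) i) * det (mat d d (\<lambda>(i,j). b (f i) j))"
      using det_rows_mul[of "\<lambda>i. vec d (b (f i))" d "\<lambda>i. a (f i) i"] by auto
  qed
  finally show ?thesis .
qed

lemma det_mat_rows_not_inj:
  fixes b :: "nat \<Rightarrow> nat \<Rightarrow> 'a :: comm_ring_1"
  assumes "\<not> inj_on f {0..<d}"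
  shows "det (mat d d (\<lambda>(i,j). b (f i) j)) = 0"
proof -
  from assms obtain i j where ij: "i \<noteq> j" "i < d" "j < d" "f i = f j"
    unfolding inj_on_def by auto
  then have "row (mat d d (\<lambda>(i,j). b (f i) j)) i = row (mat d d (\<lambda>(i,j). b (f i) j)) j"
    by (intro eq_vecI) auto
  then show ?thesis by (intro det_identical_rows[OF _ ij(1-3)]) auto
qed

lemma sum_permutes_det_mat_rows:
  fixes a b :: "nat \<Rightarrow> nat \<Rightarrow> 'a :: comm_ring_1"
  shows "(\<Sum>\<tau> | \<tau> permutes {0..<d}.
      (\<Prod>l\<in>{0..<d}. a (h (\<tau> l)) l) * det (mat d d (\<lambda>(l,j). b (h (\<tau> l)) j))) =
    det (mat d d (\<lambda>(i,j). a (h i) j)) * det (mat d d (\<lambda>(i,j). b (h i) j))"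
proof -
  let ?A = "mat d d (\<lambda>(i,j). a (h i) j)" and ?B = "mat d d (\<lambda>(i,j). b (h i) j)"
  have "(\<Prod>l\<in>{0..<d}. a (h (\<tau> l)) l) * det (mat d d (\<lambda>(l,j). b (h (\<tau> l)) j)) =
      signof \<tau> * (\<Prod>l\<in>{0..<d}. ?A $$ (\<tau> l, l)) * det ?B" if \<tau>: "\<tau> permutes {0..<d}" for \<tau>
  proof -
    have \<tau>_lt: "\<And>l. l < d \<Longrightarrow> \<tau> l < d" using permutes_in_image[OF \<tau>] by simp
    have "mat d d (\<lambda>(l,j). b (h (\<tau> l)) j) = mat d d (\<lambda>(l,j). ?B $$ (\<tau> l, j))"
      by (rule eq_matI) (auto simp: \<tau>_lt)
    then have "det (mat d d (\<lambda>(l,j). b (h (\<tau> l)) j)) = signof \<tau> * det ?B"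
      using det_permute_rows[OF _ \<tau>, of ?B] by simp
    moreover have "(\<Prod>l\<in>{0..<d}. a (h (\<tau> l)) l) = (\<Prod>l\<in>{0..<d}. ?A $$ (\<tau> l, l))"
      by (rule prod.cong) (auto simp: \<tau>_lt)
    ultimately show ?thesis by (simp add: ac_simps)
  qed
  then have "(\<Sum>\<tau> | \<tau> permutes {0..<d}.
      (\<Prod>l\<in>{0..<d}. a (h (\<tau> l)) l) * det (mat d d (\<lambda>(l,j). b (h (\<tau> l)) j))) =
      (\<Sum>\<tau> | \<tau> permutes {0..<d}. signof \<tau> * (\<Prod>l\<in>{0..<d}. ?A $$ (\<tau> l, l))) * det ?B"
    by (simp add: sum_distrib_right)
  also have "\<dots> = det ?A * det ?B"
    using mat_det_left_def[of ?A d] by simp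
  finally show ?thesis .
qed

lemma sum_bijections_det_mat_rows:
  fixes a b :: "nat \<Rightarrow> nat \<Rightarrow> 'a :: comm_ring_1"
  assumes h: "bij_betw h {0..<d} T"
  shows "(\<Sum>f | bij_betw f {0..<d} T \<and> (\<forall>x. x \<notin> {0..<d} \<longrightarrow> f x = x).
      (\<Prod>i\<in>{0..<d}. a (f i) i) * det (mat d d (\<lambda>(i,j). b (f i) j))) =
    det (mat d d (\<lambda>(i,j). a (h i) j)) * det (mat d d (\<lambda>(i,j). b (h i) j))"
proof -
  define g where "g f = (\<Prod>i\<in>{0..<d}. a (f i) i) * det (mat d d (\<lambda>(i,j). b (f i) j))"
    for f :: "nat \<Rightarrow> nat"
  have "(\<Sum>f | bij_betw f {0..<d} T \<and> (\<forall>x. x \<notin> {0..<d} \<longrightarrow> f x = x). g f) =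
      (\<Sum>\<tau> | \<tau> permutes {0..<d}. g (\<lambda>x. if x \<in> {0..<d} then h (\<tau> x) else x))"
    by (rule sum.reindex_bij_betw[OF bij_betw_permutations_bijections[OF h], symmetric])
  also have "\<dots> = (\<Sum>\<tau> | \<tau> permutes {0..<d}.
      (\<Prod>l\<in>{0..<d}. a (h (\<tau> l)) l) * det (mat d d (\<lambda>(l,j). b (h (\<tau> l)) j)))"
    unfolding g_def by (intro sum.cong refl arg_cong2[where f = "(*)"] prod.cong
        arg_cong[where f = det] eq_matI) auto
  finally show ?thesis unfolding g_def sum_permutes_det_mat_rows .
qed

text \<open>\<open>pick T i\<close> is the \<open>i\<close>-th smallest element of \<open>T\<close>, so \<open>mat d d (\<lambda>(i,j). a (pick T i) j)\<close>
  is the submatrix of \<open>(a r j)\<close> formed by the rows in \<open>T\<close>.\<close>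

theorem cauchy_binet:
  fixes a b :: "nat \<Rightarrow> nat \<Rightarrow> 'a :: comm_ring_1"
  assumes S: "finite S"
  shows "det (mat d d (\<lambda>(i,j). \<Sum>r\<in>S. a r i * b r j)) =
    (\<Sum>T | T \<subseteq> S \<and> card T = d.
      det (mat d d (\<lambda>(i,j). a (pick T i) j)) * det (mat d d (\<lambda>(i,j). b (pick T i) j)))"
proof -
  define F where "F = {f. (\<forall>i\<in>{0..<d}. f i \<in> S) \<and> (\<forall>i. i \<notin> {0..<d} \<longrightarrow> f i = i)}"
  define g where "g f = (\<Prod>i\<in>{0..<d}. a (f i) i) * det (mat d d (\<lambda>(i,j). b (f i) j))"
    for f :: "nat \<Rightarrow> nat"
  define Fi where "Fi = {f \<in> F. inj_on f {0..<d}}"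
  define TT where "TT = {T. T \<subseteq> S \<and> card T = d}"
  have fin_F: "finite F" unfolding F_def by (rule finite_bounded_functions[OF S]) auto
  have fin_Fi: "finite Fi" using fin_F unfolding Fi_def by simp
  have fin_TT: "finite TT" unfolding TT_def using S by auto
  have "det (mat d d (\<lambda>(i,j). \<Sum>r\<in>S. a r i * b r j)) = sum g F"
    unfolding F_def g_def by (rule det_mat_sum_expand_rows[OF S])
  also have "\<dots> = sum g Fi"
    using fin_F by (intro sum.mono_neutral_right) (auto simp: Fi_def g_def det_mat_rows_not_inj)
  also have "\<dots> = (\<Sum>T\<in>TT. sum g {f \<in> Fi. f ` {0..<d} = T})"
    using fin_Fi fin_TT
    by (intro sum.group[symmetric]) (auto simp: Fi_def F_def TT_def card_image)
  also have "\<dots> = (\<Sum>T\<in>TT.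
      det (mat d d (\<lambda>(i,j). a (pick T i) j)) * det (mat d d (\<lambda>(i,j). b (pick T i) j)))"
  proof (rule sum.cong[OF refl])
    fix T assume "T \<in> TT"
    then have TS: "T \<subseteq> S" and card_T: "card T = d" unfolding TT_def by auto
    have "{f \<in> Fi. f ` {0..<d} = T} = {f. bij_betw f {0..<d} T \<and> (\<forall>x. x \<notin> {0..<d} \<longrightarrow> f x = x)}"
      using TS by (auto simp: Fi_def F_def bij_betw_def)
    moreover have "bij_betw (pick T) {0..<d} T"
      using bij_betw_pick[of T] finite_subset[OF TS S] card_T by simp
    ultimately show "sum g {f \<in> Fi. f ` {0..<d} = T} =
        det (mat d d (\<lambda>(i,j). a (pick T i) j)) * det (mat d d (\<lambda>(i,j). b (pick T i) j))"
      unfolding g_def using sum_bijections_det_mat_rows by simp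
  qed
  finally show ?thesis unfolding TT_def .
qed

lemma rows_sub_eq:
  assumes X: "X \<in> carrier_mat n d" and T: "T \<subseteq> {0..<n}"
  shows "rows_sub X T = mat (card T) d (\<lambda>(i,j). X $$ (pick T i, j))"
proof -
  have "{i. i < dim_row X \<and> i \<in> T} = T" "{j. j < dim_col X \<and> j \<in> {0..<dim_col X}} = {0..<d}"
    using X T by auto
  then show ?thesis
    unfolding rows_sub_def submatrix_def using X by (intro eq_matI) (auto simp: pick_atLeastLessThan)
qed

lemma rows_sub_all:
  assumes X: "X \<in> carrier_mat n d"
  shows "rows_sub X {0..<n} = X"
  unfolding rows_sub_eq[OF X subset_refl] using X by (intro eq_matI) (auto simp: pick_atLeastLessThan)

lemma gram_rows_sub:
  assumes X: "X \<in> carrier_mat n d" and T: "T \<subseteq> {0..<n}"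
  shows "transpose_mat (rows_sub X T) * rows_sub X T =
    mat d d (\<lambda>(i,j). \<Sum>r\<in>T. X $$ (r,i) * X $$ (r,j))"
proof (rule eq_matI)
  fix i j assume "i < dim_row (mat d d (\<lambda>(i,j). \<Sum>r\<in>T. X $$ (r,i) * X $$ (r,j)))"
    "j < dim_col (mat d d (\<lambda>(i,j). \<Sum>r\<in>T. X $$ (r,i) * X $$ (r,j)))"
  then have ij: "i < d" "j < d" by auto
  have pick_T: "bij_betw (pick T) {0..<card T} T"
    using bij_betw_pick finite_subset[OF T] by blast
  have "(transpose_mat (rows_sub X T) * rows_sub X T) $$ (i,j) =
      (\<Sum>l\<in>{0..<card T}. X $$ (pick T l, i) * X $$ (pick T l, j))"
    unfolding rows_sub_eq[OF X T] using ij by (simp add: scalar_prod_def)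
  also have "\<dots> = (\<Sum>r\<in>T. X $$ (r,i) * X $$ (r,j))"
    by (rule sum.reindex_bij_betw[OF pick_T])
  finally show "(transpose_mat (rows_sub X T) * rows_sub X T) $$ (i,j) =
      mat d d (\<lambda>(i,j). \<Sum>r\<in>T. X $$ (r,i) * X $$ (r,j)) $$ (i,j)"
    using ij by simp
qed (auto simp: rows_sub_eq[OF X T])

corollary det_gram_rows_sub:
  assumes X: "X \<in> carrier_mat n d" and S: "S \<subseteq> {0..<n}"
  shows "det (transpose_mat (rows_sub X S) * rows_sub X S) =
    (\<Sum>T | T \<subseteq> S \<and> card T = d. (det (rows_sub X T))\<^sup>2)"
proof -
  have "det (transpose_mat (rows_sub X S) * rows_sub X S) =
      (\<Sum>T | T \<subseteq> S \<and> card T = d. (det (mat d d (\<lambda>(i,j). X $$ (pick T i, j))))\<^sup>2)"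
    unfolding gram_rows_sub[OF X S] cauchy_binet[OF finite_subset[OF S finite_atLeastLessThan]]
    by (simp add: power2_eq_square)
  also have "\<dots> = (\<Sum>T | T \<subseteq> S \<and> card T = d. (det (rows_sub X T))\<^sup>2)"
    using S by (intro sum.cong refl) (auto simp: rows_sub_eq[OF X])
  finally show ?thesis .
qed

lemma full_column_rank_mult_vec_eq_zero:
  fixes X :: "real mat"
  assumes X: "X \<in> carrier_mat n d" and rank: "vec_space.rank n X = d"
    and v: "v \<in> carrier_vec d" and Xv: "X *\<^sub>v v = 0\<^sub>v n"
  shows "v = 0\<^sub>v d"
proof -
  interpret vs: vec_space "TYPE(real)" n .
  have distinct: "distinct (cols X)"
  proof (rule ccontr)
    assume "\<not> distinct (cols X)"
    then have "card (set (cols X)) < d"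
      using X card_distinct card_length cols_length carrier_matD(2) nat_less_le by metis
    obtain A where A: "maximal A (\<lambda>T. T \<subseteq> set (cols X) \<and> vs.lin_indpt T)"
      using maximal_exists[of "\<lambda>T. T \<subseteq> set (cols X) \<and> vs.lin_indpt T" "card (set (cols X))" "{}"]
      by (meson List.finite_set card_mono empty_iff empty_subsetI vs.finite_lin_indpt2 rev_finite_subset)
    then have "card A \<le> card (set (cols X))" by (simp add: card_mono maximal_def)
    with \<open>card (set (cols X)) < d\<close> vs.rank_card_indpt[OF X A] rank show False by simp
  qed
  show ?thesis
  proof (rule ccontr)
    assume "v \<noteq> 0\<^sub>v d"
    with vs.lin_depI[OF X v _ Xv distinct] vs.full_rank_lin_indpt[OF X rank distinct]
    show False by simp
  qed
qed

lemma det_gram_pos: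
  fixes X :: "real mat"
  assumes X: "X \<in> carrier_mat n d" and rank: "vec_space.rank n X = d"
  shows "det (transpose_mat X * X) > 0"
proof -
  have G: "transpose_mat X * X \<in> carrier_mat d d" using X by auto
  have "det (transpose_mat X * X) \<ge> 0"
    using det_gram_rows_sub[OF X subset_refl] rows_sub_all[OF X] by (simp add: sum_nonneg)
  moreover have "det (transpose_mat X * X) \<noteq> 0"
  proof
    assume "det (transpose_mat X * X) = 0"
    then obtain v where v: "v \<in> carrier_vec d" "v \<noteq> 0\<^sub>v d" "(transpose_mat X * X) *\<^sub>v v = 0\<^sub>v d"
      using det_0_iff_vec_prod_zero_field[OF G] by blast
    define w where "w = X *\<^sub>v v"
    have w: "w \<in> carrier_vec n" unfolding w_def using X v by auto
    have "transpose_mat X *\<^sub>v w = 0\<^sub>v d"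
      using v X unfolding w_def by (simp add: assoc_mult_mat_vec)
    then have "w \<bullet> w = 0"
      using transpose_vec_mult_scalar[OF X v(1) w] v(1) unfolding w_def by simp
    then have "\<forall>i\<in>{0..<n}. w $ i * w $ i = 0"
      using w unfolding scalar_prod_def by (subst sum_nonneg_eq_0_iff[symmetric]) auto
    then have "w = 0\<^sub>v n" using w by (intro eq_vecI) auto
    with full_column_rank_mult_vec_eq_zero[OF X rank v(1)] v(2) show False unfolding w_def by simp
  qed
  ultimately show ?thesis by simp
qed

lemma pmf_volume_pmf:
  fixes X :: "real mat"
  assumes X: "X \<in> carrier_mat n d" and rank: "vec_space.rank n X = d"
  shows "pmf (volume_pmf X) T = (if T \<subseteq> {0..<n} \<and> card T = d
      then (det (rows_sub X T))\<^sup>2 / det (transpose_mat X * X) else 0)"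
proof -
  define G where "G = det (transpose_mat X * X)"
  define V where "V T = (if T \<subseteq> {0..<n} \<and> card T = d then (det (rows_sub X T))\<^sup>2 / G else 0)" for T
  define A where "A = {T. T \<subseteq> {0..<n} \<and> card T = d}"
  have volume: "volume_pmf X = embed_pmf V"
    using X unfolding volume_pmf_def V_def G_def by (intro arg_cong[where f = embed_pmf] ext) simp
  have G: "G > 0" unfolding G_def by (rule det_gram_pos[OF X rank])
  have V_nonneg: "0 \<le> V T" for T unfolding V_def using G by simp
  have "(\<integral>\<^sup>+T. ennreal (V T) \<partial>count_space UNIV) = (\<Sum>T\<in>A. ennreal (V T))"
    by (rule nn_integral_count_space') (auto simp: V_def A_def)
  also have "\<dots> = ennreal (\<Sum>T\<in>A. V T)"
    using V_nonneg by (simp add: sum_ennreal)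
  also have "(\<Sum>T\<in>A. V T) = (\<Sum>T\<in>A. (det (rows_sub X T))\<^sup>2) / G"
    unfolding sum_divide_distrib by (intro sum.cong) (auto simp: V_def A_def)
  also have "(\<Sum>T\<in>A. (det (rows_sub X T))\<^sup>2) = G"
    unfolding A_def G_def using det_gram_rows_sub[OF X subset_refl] rows_sub_all[OF X] by simp
  finally have "(\<integral>\<^sup>+T. ennreal (V T) \<partial>count_space UNIV) = 1" using G by simp
  then have "pmf (volume_pmf X) T = V T" unfolding volume by (rule pmf_embed_pmf[OF V_nonneg])
  then show ?thesis unfolding V_def G_def .
qed

lemma pmf_union_random_subset:
  assumes U: "finite U" and A: "A \<subseteq> U" and m: "m \<le> card U - card A"
    and S: "S \<subseteq> U" "card S = card A + m"
  shows "pmf (pmf_of_set {R. R \<subseteq> U - A \<and> card R = m} \<bind> (\<lambda>R. return_pmf (A \<union> R))) S =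
    (if A \<subseteq> S then 1 / real ((card U - card A) choose m) else 0)"
proof -
  define Rs where "Rs = {R. R \<subseteq> U - A \<and> card R = m}"
  have fin_A: "finite A" using finite_subset[OF A U] .
  have "card (U - A) = card U - card A" using card_Diff_subset[OF fin_A A] .
  then have card_Rs: "card Rs = (card U - card A) choose m"
    unfolding Rs_def using n_subsets[of "U - A" m] U by simp
  have fin_Rs: "finite Rs"
    using U by (intro finite_subset[of Rs "Pow (U - A)"]) (auto simp: Rs_def)
  have "card Rs \<noteq> 0" unfolding card_Rs using m by simp
  then have Rs_nonempty: "Rs \<noteq> {}" by (metis card.empty)
  have "pmf (pmf_of_set Rs \<bind> (\<lambda>R. return_pmf (A \<union> R))) S = card (Rs \<inter> (\<union>) A -` {S}) / card Rs"
    unfolding map_pmf_def[symmetric] pmf_map measure_pmf_of_set[OF Rs_nonempty fin_Rs] ..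
  also have "Rs \<inter> (\<union>) A -` {S} = (if A \<subseteq> S then {S - A} else {})"
  proof (cases "A \<subseteq> S")
    case True
    have "card (S - A) = m" using card_Diff_subset[OF fin_A True] S(2) by simp
    then have "S - A \<in> Rs" unfolding Rs_def using S by blast
    moreover have "R = S - A" if "R \<in> Rs" "A \<union> R = S" for R
      using that unfolding Rs_def by blast
    moreover have "A \<union> (S - A) = S" using True by (simp add: Un_absorb1)
    ultimately have "Rs \<inter> (\<union>) A -` {S} = {S - A}" by blast
    with True show ?thesis by simp
  qed auto
  finally show ?thesis unfolding Rs_def[symmetric] card_Rs by simp
qed

theorem mainTheorem6:
  fixes X :: "real mat" and n d k :: nat and S :: "nat set"
  assumes "X \<in> carrier_mat n d"
    and "vec_space.rank n X = d"
    and "d \<le> k" and "k \<le> n"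
    and "S \<subseteq> {0..<n}" and "card S = k"
  shows "pmf (augmented_pmf X k) S =
    det (transpose_mat (rows_sub X S) * rows_sub X S) /
      (real ((n - d) choose (k - d)) * det (transpose_mat X * X))"
proof -
  note X = assms(1) and rank = assms(2) and S = assms(5,6)
  define C where "C = real ((n - d) choose (k - d))"
  define G where "G = det (transpose_mat X * X)"
  define A where "A = {T. T \<subseteq> {0..<n} \<and> card T = d}"
  define K where "K T = pmf_of_set {R. R \<subseteq> {0..<n} - T \<and> card R = k - d} \<bind>
    (\<lambda>R. return_pmf (T \<union> R))" for T
  have dim_X: "dim_row X = n" "dim_col X = d" using X by auto
  have fin_A: "finite A" unfolding A_def by auto
  have second_stage: "pmf (K T) S = (if T \<subseteq> S then 1 / C else 0)"
    if "T \<subseteq> {0..<n}" "card T = d" for T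
    using pmf_union_random_subset[of "{0..<n}" T "k - d" S] that assms(3-6)
    unfolding K_def C_def by simp
  have support: "set_pmf (volume_pmf X) \<subseteq> A"
  proof
    fix T assume "T \<in> set_pmf (volume_pmf X)"
    then have "pmf (volume_pmf X) T \<noteq> 0" by (simp add: set_pmf_iff)
    then show "T \<in> A" unfolding pmf_volume_pmf[OF X rank] A_def by (simp split: if_splits)
  qed
  have "pmf (augmented_pmf X k) S = measure_pmf.expectation (volume_pmf X) (\<lambda>T. pmf (K T) S)"
    unfolding augmented_pmf_def K_def dim_X pmf_bind ..
  also have "\<dots> = (\<Sum>T\<in>A. pmf (K T) S * pmf (volume_pmf X) T)"
    using support by (intro integral_measure_pmf_real[OF fin_A]) blast
  also have "\<dots> = (\<Sum>T\<in>A. if T \<subseteq> S then (det (rows_sub X T))\<^sup>2 / (C * G) else 0)"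
    by (intro sum.cong refl) (auto simp: A_def G_def second_stage pmf_volume_pmf[OF X rank])
  also have "\<dots> = (\<Sum>T\<in>{T \<in> A. T \<subseteq> S}. (det (rows_sub X T))\<^sup>2 / (C * G))"
    by (rule sum.inter_filter[OF fin_A, symmetric])
  also have "{T \<in> A. T \<subseteq> S} = {T. T \<subseteq> S \<and> card T = d}"
    unfolding A_def using S(1) by blast
  also have "(\<Sum>T | T \<subseteq> S \<and> card T = d. (det (rows_sub X T))\<^sup>2 / (C * G)) =
      det (transpose_mat (rows_sub X S) * rows_sub X S) / (C * G)"
    unfolding det_gram_rows_sub[OF X S(1)] sum_divide_distrib ..
  finally show ?thesis unfolding C_def G_def .
qed

end
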